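(* Let $\mathfrak{g}$ be a nilpotent Lie algebra over an infinite field $\mathbb{F}$, and let $n$ be a non-negative integer such that $\dim[\mathfrak{g},\mathfrak{g}] > n(n-1)/2$. Then the set $\{x\in\mathfrak{g} : b(x)\ge n\}$ of elements of breadth at least $n$ cannot be covered by (i.e. is not contained in the union of) finitely many proper Lie subalgebras of $\mathfrak{g}$.
   Context: For an element $x$ of a Lie algebra $\mathfrak{g}$ over a field, the centralizer is $C_{\mathfrak{g}}(x)=\{y\in\mathfrak{g} : [x,y]=0\}$, and the breadth of $x$ is $b(x)=\dim\mathfrak{g}-\dim C_{\mathfrak{g}}(x)$, i.e. the codimension of $C_{\mathfrak{g}}(x)$ in $\mathfrak{g}$ (this is a non-negative integer or $\infty$ if $\mathfrak{g}$ is infinite-dimensional). $\mathfrak{g}'=[\mathfrak{g},\mathfrak{g}]$ denotes the derived subalgebra. *)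

theory Defs
  imports Main "HOL-Library.Extended_Nat"
begin

text \<open>A Lie algebra over a field 'k is modelled as the whole type 'v (an abelian group)
with a scalar multiplication sc and a bracket br.\<close>

definition lie_algebra :: "('k::field \<Rightarrow> 'v::ab_group_add \<Rightarrow> 'v) \<Rightarrow> ('v \<Rightarrow> 'v \<Rightarrow> 'v) \<Rightarrow> bool" where
  "lie_algebra sc br \<longleftrightarrow> vector_space sc
     \<and> (\<forall>x. Vector_Spaces.linear sc sc (br x))
     \<and> (\<forall>y. Vector_Spaces.linear sc sc (\<lambda>x. br x y))
     \<and> (\<forall>x. br x x = 0)
     \<and> (\<forall>x y z. br x (br y z) + br y (br z x) + br z (br x y) = 0)"

definition lie_subalgebra :: "('k::field \<Rightarrow> 'v::ab_group_add \<Rightarrow> 'v) \<Rightarrow> ('v \<Rightarrow> 'v \<Rightarrow> 'v) \<Rightarrow> 'v set \<Rightarrow> bool" where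
  "lie_subalgebra sc br H \<longleftrightarrow> module.subspace sc H \<and> (\<forall>x\<in>H. \<forall>y\<in>H. br x y \<in> H)"

definition bracket_set :: "('v \<Rightarrow> 'v \<Rightarrow> 'v) \<Rightarrow> 'v set \<Rightarrow> 'v set \<Rightarrow> 'v set" where
  "bracket_set br A B = {br a b | a b. a \<in> A \<and> b \<in> B}"

fun lower_central :: "('k::field \<Rightarrow> 'v::ab_group_add \<Rightarrow> 'v) \<Rightarrow> ('v \<Rightarrow> 'v \<Rightarrow> 'v) \<Rightarrow> nat \<Rightarrow> 'v set" where
  "lower_central sc br 0 = UNIV"
| "lower_central sc br (Suc k) = module.span sc (bracket_set br UNIV (lower_central sc br k))"

definition nilpotent_lie :: "('k::field \<Rightarrow> 'v::ab_group_add \<Rightarrow> 'v) \<Rightarrow> ('v \<Rightarrow> 'v \<Rightarrow> 'v) \<Rightarrow> bool" where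
  "nilpotent_lie sc br \<longleftrightarrow> (\<exists>k. lower_central sc br k = {0})"

definition derived_subalgebra :: "('k::field \<Rightarrow> 'v::ab_group_add \<Rightarrow> 'v) \<Rightarrow> ('v \<Rightarrow> 'v \<Rightarrow> 'v) \<Rightarrow> 'v set" where
  "derived_subalgebra sc br = module.span sc (bracket_set br UNIV UNIV)"

definition edim :: "('k::field \<Rightarrow> 'v::ab_group_add \<Rightarrow> 'v) \<Rightarrow> 'v set \<Rightarrow> enat" where
  "edim sc W = Sup {enat (card S) | S. finite S \<and> S \<subseteq> W \<and> \<not> module.dependent sc S}"

text \<open>Codimension of a subspace U in the whole space (= dimension of the quotient), possibly infinite.\<close>
definition ecodim :: "('k::field \<Rightarrow> 'v::ab_group_add \<Rightarrow> 'v) \<Rightarrow> 'v set \<Rightarrow> enat" where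
  "ecodim sc U = Sup {enat (card S) | S. finite S \<and> \<not> module.dependent sc S \<and> module.span sc S \<inter> U = {0}}"

definition centralizer :: "('v::zero \<Rightarrow> 'v \<Rightarrow> 'v) \<Rightarrow> 'v \<Rightarrow> 'v set" where
  "centralizer br x = {y. br x y = 0}"

definition breadth :: "('k::field \<Rightarrow> 'v::ab_group_add \<Rightarrow> 'v) \<Rightarrow> ('v \<Rightarrow> 'v \<Rightarrow> 'v) \<Rightarrow> 'v \<Rightarrow> enat" where
  "breadth sc br x = ecodim sc (centralizer br x)"

end

theory Submission
  imports Defs
begin

text \<open>Take \<open>x\<close> outside the covering subspaces with \<open>rank (ad x) = m\<close> maximal; as \<open>b(x) < n\<close>,
  \<open>m < n\<close>. Over an infinite field a line through \<open>x\<close> meets the union only in finitely many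
  points, and for \<open>z \<in> C(x)\<close> with \<open>[y, z] \<notin> [x, g]\<close> the rank of \<open>ad (x + t y)\<close> would exceed
  \<open>m\<close> for all but finitely many \<open>t\<close>; hence \<open>[g, C(x)] \<subseteq> [x, g]\<close>. Writing
  \<open>g = C(x) + span {w\<^sub>1, \<dots>, w\<^sub>m}\<close> with \<open>[x, w\<^sub>j]\<close> a basis of \<open>[x, g]\<close>, the derived algebra is
  spanned by the \<open>[x, w\<^sub>j]\<close> and the \<open>[w\<^sub>i, w\<^sub>j]\<close> with \<open>i < j\<close>, so
  \<open>dim g' \<le> m (m + 1) / 2 \<le> n (n - 1) / 2\<close>.\<close>

context vector_space
begin

definition independent_family :: "('i \<Rightarrow> 'b) \<Rightarrow> 'i set \<Rightarrow> bool" where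
  "independent_family u I \<longleftrightarrow> (\<forall>c. (\<Sum>i\<in>I. c i *s u i) = 0 \<longrightarrow> (\<forall>i\<in>I. c i = 0))"

end

text \<open>Otherwise the copy created by the interpretation of \<open>vector_space\<close> for real vector spaces
  shadows the local name inside the locale.\<close>
hide_const (open) real_vector.independent_family

context vector_space
begin

lemma independent_familyD:
  "independent_family u I \<Longrightarrow> (\<Sum>i\<in>I. c i *s u i) = 0 \<Longrightarrow> i \<in> I \<Longrightarrow> c i = 0"
  unfolding independent_family_def by blast

lemma independent_family_cong:
  "independent_family u I \<Longrightarrow> (\<And>i. i \<in> I \<Longrightarrow> u i = u' i) \<Longrightarrow> independent_family u' I"
  unfolding independent_family_def by (metis (no_types, lifting) sum.cong)

lemma independent_family_inj_on:
  assumes "finite I" "independent_family u I"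
  shows "inj_on u I"
proof (rule inj_onI, rule ccontr)
  fix s t assume st: "s \<in> I" "t \<in> I" "u s = u t" "s \<noteq> t"
  define c where "c i = (if i = s then 1 else if i = t then -1 else (0::'a))" for i
  have "c i *s u i = (if i = s then u s else 0) - (if i = t then u t else 0)" for i
    using st(4) by (simp add: c_def)
  then have "(\<Sum>i\<in>I. c i *s u i) = u s - u t"
    using st(1,2) assms(1) by (simp add: sum_subtractf)
  with st(1,3) assms(2) have "c s = 0"
    unfolding independent_family_def by simp
  then show False by (simp add: c_def)
qed

lemma independent_image_if_independent_family:
  fixes u :: "'i \<Rightarrow> 'b"
  assumes "finite I" "independent_family u I"
  shows "independent (u ` I)"
proof (rule independent_if_scalars_zero)
  have inj: "inj_on u I" using independent_family_inj_on[OF assms] .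
  show "finite (u ` I)" using assms(1) by simp
  fix f x assume "(\<Sum>x\<in>u ` I. f x *s x) = 0" "x \<in> u ` I"
  then obtain i where "i \<in> I" "x = u i" and "(\<Sum>i\<in>I. f (u i) *s u i) = 0"
    by (auto simp: sum.reindex[OF inj])
  with assms(2) show "f x = 0"
    unfolding independent_family_def by auto
qed

lemma span_image_eq_sum:
  assumes "finite I" "v \<in> span (u ` I)"
  shows "\<exists>c. v = (\<Sum>i\<in>I. c i *s u i)"
  using assms
proof (induction I arbitrary: v rule: finite_induct)
  case (insert j I)
  then obtain k where "v - k *s u j \<in> span (u ` I)"
    by (auto simp: span_insert)
  with insert.IH obtain c where c: "v = k *s u j + (\<Sum>i\<in>I. c i *s u i)"
    by (metis diff_eq_eq add.commute)
  have "(\<Sum>i\<in>I. c i *s u i) = (\<Sum>i\<in>I. (c(j := k)) i *s u i)"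
    using insert.hyps(2) by (intro sum.cong) auto
  with c insert.hyps have "v = (\<Sum>i\<in>insert j I. (c(j := k)) i *s u i)"
    by simp
  then show ?case by blast
qed simp

lemma independent_family_lessThan_Suc:
  assumes "independent_family u {..<m}" "u m \<notin> span (u ` {..<m})"
  shows "independent_family u {..<Suc m}"
  unfolding independent_family_def
proof (intro allI impI)
  fix c assume rel: "(\<Sum>i<Suc m. c i *s u i) = 0"
  have "c m = 0"
  proof (rule ccontr)
    assume "c m \<noteq> 0"
    from rel have "c m *s u m = - (\<Sum>i<m. c i *s u i)"
      by (simp add: eq_neg_iff_add_eq_0 add.commute)
    then have "u m = inverse (c m) *s - (\<Sum>i<m. c i *s u i)"
      using \<open>c m \<noteq> 0\<close> by (metis scale_left_imp_eq scale_scale right_inverse scale_one)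
    also have "\<dots> \<in> span (u ` {..<m})"
      by (intro span_scale span_neg span_sum) (auto intro: span_base)
    finally show False using assms(2) by simp
  qed
  with rel assms(1) have "\<forall>i<m. c i = 0"
    unfolding independent_family_def by simp
  with \<open>c m = 0\<close> show "\<forall>i\<in>{..<Suc m}. c i = 0"
    by (auto simp: less_Suc_eq)
qed

text \<open>The usual proof that eigenvectors for distinct eigenvalues are independent; \<open>rescale\<close>
  stands in for applying the operator, \<open>u t\<close> having eigenvalue \<open>f t\<close>.\<close>
lemma independent_family_if_relations_rescale:
  assumes "finite T" "inj_on f T" "\<And>t. t \<in> T \<Longrightarrow> u t \<noteq> 0"
    and rescale: "\<And>S l. S \<subseteq> T \<Longrightarrow> (\<Sum>t\<in>S. l t *s u t) = 0 \<Longrightarrow> (\<Sum>t\<in>S. (l t * f t) *s u t) = 0"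
  shows "independent_family u T"
proof -
  have "independent_family u S" if "S \<subseteq> T" for S
    using finite_subset[OF that assms(1)] that
  proof (induction S rule: finite_induct)
    case empty
    then show ?case by (simp add: independent_family_def)
  next
    case (insert s S)
    show ?case unfolding independent_family_def
    proof (intro allI impI)
      fix l assume rel: "(\<Sum>t\<in>insert s S. l t *s u t) = 0"
      define \<mu> where "\<mu> t = l t * (f t - f s)" for t
      have "(\<Sum>t\<in>insert s S. \<mu> t *s u t)
          = (\<Sum>t\<in>insert s S. (l t * f t) *s u t) - f s *s (\<Sum>t\<in>insert s S. l t *s u t)"
        by (simp add: \<mu>_def scale_sum_right sum_subtractf[symmetric] algebra_simps)
      also have "\<dots> = 0" using rel rescale[OF insert.prems rel] by simp
      finally have "(\<Sum>t\<in>S. \<mu> t *s u t) = 0"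
        using insert.hyps by (simp add: \<mu>_def)
      with insert.IH insert.prems have "\<forall>t\<in>S. \<mu> t = 0"
        unfolding independent_family_def by simp
      moreover have "f t \<noteq> f s" if "t \<in> S" for t
        using that insert.hyps(2) insert.prems assms(2) by (metis inj_onD insert_subset subsetD)
      ultimately have "\<forall>t\<in>S. l t = 0" by (simp add: \<mu>_def)
      with rel insert.hyps have "l s *s u s = 0" by simp
      with assms(3) insert.prems have "l s = 0" by auto
      with \<open>\<forall>t\<in>S. l t = 0\<close> show "\<forall>t\<in>insert s S. l t = 0" by simp
    qed
  qed
  then show ?thesis by simp
qed

lemma scale_sum_sum_swap:
  "(\<Sum>t\<in>T. l t *s (\<Sum>i\<in>I. c t i *s g i)) = (\<Sum>i\<in>I. (\<Sum>t\<in>T. l t * c t i) *s g i)"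
  by (simp add: scale_sum_right scale_sum_left) (rule sum.swap)

text \<open>For each bad \<open>t\<close> pick a nontrivial relation \<open>c\<^sub>t\<close>; the vectors \<open>u\<^sub>t = \<Sum> c\<^sub>t a\<close> satisfy
  \<open>\<Sum> c\<^sub>t b = - u\<^sub>t / t\<close>, which makes them independent, and they all lie in the span of the \<open>a\<close>'s.\<close>
lemma finite_dependent_perturbations:
  assumes "finite I" and a: "independent_family a I"
  shows "finite {t. \<not> independent_family (\<lambda>i. a i + t *s b i) I}"
proof -
  define B where "B = {t. \<not> independent_family (\<lambda>i. a i + t *s b i) I}"
  have "\<forall>t\<in>B. \<exists>c. (\<Sum>i\<in>I. c i *s (a i + t *s b i)) = 0 \<and> (\<exists>i\<in>I. c i \<noteq> 0)"
    unfolding B_def independent_family_def by auto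
  then obtain c where c: "\<And>t. t \<in> B \<Longrightarrow>
      (\<Sum>i\<in>I. c t i *s (a i + t *s b i)) = 0 \<and> (\<exists>i\<in>I. c t i \<noteq> 0)"
    by metis
  define u where "u t = (\<Sum>i\<in>I. c t i *s a i)" for t
  define v where "v t = (\<Sum>i\<in>I. c t i *s b i)" for t
  have "0 \<notin> B" using a by (simp add: B_def)
  have u_nonzero: "u t \<noteq> 0" if "t \<in> B" for t
    using c[OF that] a unfolding independent_family_def u_def by blast
  have v_eq: "v t = - inverse t *s u t" if "t \<in> B" for t
  proof -
    have "u t + t *s v t = (\<Sum>i\<in>I. c t i *s (a i + t *s b i))"
      by (simp add: u_def v_def scale_sum_right sum.distrib scale_right_distrib mult.commute)
    then have "t *s v t = - u t"
      using c[OF that] by (simp add: eq_neg_iff_add_eq_0 add.commute)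
    then have "inverse t *s t *s v t = inverse t *s - u t" by simp
    moreover have "t \<noteq> 0" using that \<open>0 \<notin> B\<close> by auto
    ultimately show ?thesis by simp
  qed
  have rescale: "(\<Sum>t\<in>T. (l t * inverse t) *s u t) = 0"
    if "T \<subseteq> B" "(\<Sum>t\<in>T. l t *s u t) = 0" for T l
  proof -
    have "(\<Sum>i\<in>I. (\<Sum>t\<in>T. l t * c t i) *s a i) = 0"
      using that(2) scale_sum_sum_swap[of l c a I T] by (simp add: u_def)
    then have coeffs: "\<forall>i\<in>I. (\<Sum>t\<in>T. l t * c t i) = 0"
      using independent_familyD[OF a, of "\<lambda>i. \<Sum>t\<in>T. l t * c t i"] by blast
    have "- (\<Sum>t\<in>T. (l t * inverse t) *s u t) = (\<Sum>t\<in>T. l t *s v t)"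
      using that(1) by (simp add: v_eq subset_iff sum_negf[symmetric] mult.commute)
    also have "\<dots> = (\<Sum>i\<in>I. (\<Sum>t\<in>T. l t * c t i) *s b i)"
      using scale_sum_sum_swap[of l c b I T] by (simp add: v_def)
    also have "\<dots> = 0" using coeffs by simp
    finally show ?thesis by simp
  qed
  have "card T \<le> card I" if "T \<subseteq> B" "finite T" for T
  proof -
    have "independent_family u T"
    proof (rule independent_family_if_relations_rescale)
      show "inj_on inverse T" by (auto intro: inj_onI)
      show "(\<Sum>t\<in>S. (l t * inverse t) *s u t) = 0"
        if "S \<subseteq> T" "(\<Sum>t\<in>S. l t *s u t) = 0" for S l
        using rescale that \<open>T \<subseteq> B\<close> by blast
    qed (use that u_nonzero in auto)
    then have "independent (u ` T)" "card (u ` T) = card T"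
      using independent_image_if_independent_family independent_family_inj_on card_image
        \<open>finite T\<close> by blast+
    moreover have "u ` T \<subseteq> span (a ` I)"
      by (auto simp: u_def intro!: span_sum span_scale intro: span_base)
    ultimately have "card T \<le> card (a ` I)"
      using independent_span_bound \<open>finite I\<close> by (metis finite_imageI)
    also have "\<dots> \<le> card I" using card_image_le \<open>finite I\<close> by blast
    finally show ?thesis .
  qed
  then show ?thesis
    unfolding B_def[symmetric] by (metis infinite_arbitrarily_large Suc_n_not_le_n)
qed

lemma finite_line_inter_subspace:
  assumes H: "subspace H" and "y \<notin> H"
  shows "finite {t. y + t *s u \<in> H}"
proof (cases "{t. y + t *s u \<in> H} = {}")
  case False
  then obtain t0 where t0: "y + t0 *s u \<in> H" by auto
  have "t = t0" if t: "y + t *s u \<in> H" for t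
  proof (rule ccontr)
    assume "t \<noteq> t0"
    from subspace_diff[OF H t t0] have "(t - t0) *s u \<in> H"
      by (simp add: scale_left_diff_distrib)
    then have "inverse (t - t0) *s (t - t0) *s u \<in> H" by (rule subspace_scale[OF H])
    with \<open>t \<noteq> t0\<close> have "t *s u \<in> H" by (simp add: subspace_scale[OF H])
    from subspace_diff[OF H t this] \<open>y \<notin> H\<close> show False by simp
  qed
  then have "{t. y + t *s u \<in> H} \<subseteq> {t0}" by blast
  then show ?thesis by (rule finite_subset) simp
qed simp

lemma finite_line_inter_Union_subspaces:
  assumes "finite \<H>" "\<forall>H\<in>\<H>. subspace H" "y \<notin> \<Union>\<H>"
  shows "finite {t. y + t *s u \<in> \<Union>\<H>}"
proof -
  have "{t. y + t *s u \<in> \<Union>\<H>} = (\<Union>H\<in>\<H>. {t. y + t *s u \<in> H})" by auto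
  with assms show ?thesis by (simp add: finite_line_inter_subspace)
qed

lemma ex_not_in_Union_proper_subspaces:
  assumes "infinite (UNIV :: 'a set)" "finite \<H>" "\<forall>H\<in>\<H>. subspace H \<and> H \<noteq> UNIV"
  shows "\<exists>y. y \<notin> \<Union>\<H>"
  using assms(2,3)
proof (induction \<H> rule: finite_induct)
  case (insert H \<H>)
  then obtain y where y: "y \<notin> \<Union>\<H>" by auto
  show ?case
  proof (cases "y \<in> H")
    case True
    from insert.prems obtain u where H: "subspace H" and "u \<notin> H" by auto
    have "finite ({t. y + t *s u \<in> \<Union>\<H>} \<union> {0})"
      using finite_line_inter_Union_subspaces insert y by simp
    then obtain t where t: "t \<notin> {t. y + t *s u \<in> \<Union>\<H>} \<union> {0}"
      using ex_new_if_finite[OF assms(1)] by blast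
    have "y + t *s u \<notin> H"
    proof
      assume "y + t *s u \<in> H"
      from subspace_diff[OF H this True] have "t *s u \<in> H" by simp
      then have "inverse t *s t *s u \<in> H" by (rule subspace_scale[OF H])
      with t \<open>u \<notin> H\<close> show False by simp
    qed
    with t show ?thesis by auto
  qed (use y in auto)
qed simp

lemma edim_le_card_if_subset_span:
  assumes "finite T" "W \<subseteq> span T"
  shows "edim scale W \<le> enat (card T)"
  unfolding edim_def
proof (rule Sup_least, clarify)
  fix S assume "S \<subseteq> W" "independent S"
  with assms have "card S \<le> card T"
    using independent_span_bound by (meson order_trans)
  then show "enat (card S) \<le> enat (card T)" by simp
qed

lemma card_Un_image_lessThan_pairs_le:
  fixes m n :: nat
  assumes "m < n"
  shows "card (f ` {..<m} \<union> g ` (SIGMA j:{..<m}. {..<j})) \<le> n * (n - 1) div 2"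
proof -
  have "card (f ` {..<m} \<union> g ` (SIGMA j:{..<m}. {..<j})) \<le> m + (\<Sum>j<m. j)"
    using card_image_le[of "{..<m}" f] card_image_le[of "SIGMA j:{..<m}. {..<j}" g]
    by (simp add: card_SigmaI order_trans[OF card_Un_le add_le_mono])
  also have "\<dots> = (\<Sum>j<Suc m. j)" by simp
  also have "\<dots> = m * (m + 1) div 2"
    using gauss_sum[where 'a=nat, of m] by (simp add: atLeast0AtMost lessThan_Suc_atMost)
  also have "\<dots> \<le> (n - 1) * n div 2"
    using assms by (intro div_le_mono mult_le_mono) auto
  also have "\<dots> = n * (n - 1) div 2" by (simp add: mult.commute)
  finally show ?thesis .
qed

end

locale alternating_bracket = vector_space +
  fixes br :: "'b \<Rightarrow> 'b \<Rightarrow> 'b"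
  assumes br_add_right: "br x (y + z) = br x y + br x z"
    and br_scale_right: "br x (c *s y) = c *s br x y"
    and br_add_left: "br (x + y) z = br x z + br y z"
    and br_scale_left: "br (c *s x) y = c *s br x y"
    and br_self [simp]: "br x x = 0"
begin

lemma br_zero_right [simp]: "br x 0 = 0"
  using br_scale_right[of x 0 0] by simp

lemma br_zero_left [simp]: "br 0 x = 0"
  using br_scale_left[of 0 0 x] by simp

lemma br_diff_right: "br x (y - z) = br x y - br x z"
  by (metis br_add_right diff_add_cancel eq_diff_eq)

lemma br_antisym: "br x y = - br y x"
proof -
  have "0 = br (x + y) (x + y)" by simp
  also have "\<dots> = br x x + br y x + (br x y + br y y)" by (simp only: br_add_left br_add_right)
  also have "\<dots> = br x y + br y x" by (simp add: add.commute)
  finally have "br x y + br y x = 0" by simp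
  then show ?thesis by (simp add: add_eq_0_iff2)
qed

lemma br_sum_right: "br x (\<Sum>i\<in>I. c i *s v i) = (\<Sum>i\<in>I. c i *s br x (v i))"
  by (induction I rule: infinite_finite_induct) (auto simp: br_add_right br_scale_right)

lemma br_sum_left: "br (\<Sum>i\<in>I. c i *s v i) y = (\<Sum>i\<in>I. c i *s br (v i) y)"
  by (induction I rule: infinite_finite_induct) (auto simp: br_add_left br_scale_left)

definition ad_rank_ge :: "'b \<Rightarrow> nat \<Rightarrow> bool" where
  "ad_rank_ge x k \<longleftrightarrow> (\<exists>w. independent_family (\<lambda>j. br x (w j)) {..<k})"

lemma enat_le_breadth_if_ad_rank_ge:
  assumes "ad_rank_ge x k"
  shows "enat k \<le> breadth scale br x"
proof -
  from assms obtain w where w: "independent_family (\<lambda>j. br x (w j)) {..<k}"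
    by (auto simp: ad_rank_ge_def)
  let ?W = "w ` {..<k}"
  have inj: "inj_on w {..<k}"
    using independent_family_inj_on[OF _ w] by (auto simp: inj_on_def)
  have indep_W: "independent ?W"
  proof (rule independent_if_scalars_zero)
    fix f v assume rel: "(\<Sum>v\<in>?W. f v *s v) = 0" and "v \<in> ?W"
    then obtain j where j: "j < k" "v = w j" by auto
    from rel have "br x (\<Sum>j<k. f (w j) *s w j) = 0"
      by (simp add: sum.reindex[OF inj])
    then have "(\<Sum>j<k. f (w j) *s br x (w j)) = 0" by (simp add: br_sum_right)
    with j show "f v = 0" using independent_familyD[OF w, of "\<lambda>j. f (w j)"] by simp
  qed simp
  have complement: "span ?W \<inter> centralizer br x = {0}"
  proof (intro equalityI subsetI)
    fix v assume v: "v \<in> span ?W \<inter> centralizer br x"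
    then obtain c where c: "v = (\<Sum>j<k. c j *s w j)"
      using span_image_eq_sum[of "{..<k}" v w] by auto
    with v have "(\<Sum>j<k. c j *s br x (w j)) = 0"
      by (simp add: centralizer_def br_sum_right)
    then have "\<forall>j<k. c j = 0" using independent_familyD[OF w, of c] by blast
    with c show "v \<in> {0}" by simp
  qed (auto simp: centralizer_def span_zero)
  have "enat (card ?W) \<le> breadth scale br x"
    unfolding breadth_def ecodim_def
    by (intro Sup_upper CollectI exI[of _ ?W]) (simp add: indep_W complement)
  then show ?thesis using card_image[OF inj] by simp
qed

lemma ad_image_subset_span:
  assumes "independent_family (\<lambda>j. br x (w j)) {..<m}" "\<not> ad_rank_ge x (Suc m)"
  shows "br x a \<in> span ((\<lambda>j. br x (w j)) ` {..<m})"
proof (rule ccontr)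
  assume not_in: "br x a \<notin> span ((\<lambda>j. br x (w j)) ` {..<m})"
  have indep: "independent_family (\<lambda>j. br x ((w(m := a)) j)) {..<m}"
    using assms(1) by (rule independent_family_cong) simp
  have "(\<lambda>j. br x ((w(m := a)) j)) ` {..<m} = (\<lambda>j. br x (w j)) ` {..<m}"
    by (rule image_cong) auto
  with not_in have "br x ((w(m := a)) m) \<notin> span ((\<lambda>j. br x ((w(m := a)) j)) ` {..<m})"
    by simp
  with indep have "independent_family (\<lambda>j. br x ((w(m := a)) j)) {..<Suc m}"
    by (rule independent_family_lessThan_Suc)
  with assms(2) show False unfolding ad_rank_ge_def by blast
qed

text \<open>Otherwise \<open>ad (x + t y)\<close> maps \<open>w\<^sub>1, \<dots>, w\<^sub>m, z / t\<close> to an independent family for all but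
  finitely many \<open>t\<close>.\<close>
lemma bracket_centralizer_in_ad_image:
  assumes "infinite (UNIV :: 'a set)"
    and w: "independent_family (\<lambda>j. br x (w j)) {..<m}"
    and lines: "\<And>y. finite {t. ad_rank_ge (x + t *s y) (Suc m)}"
    and "br x z = 0"
  shows "br y z \<in> span ((\<lambda>j. br x (w j)) ` {..<m})"
proof (rule ccontr)
  assume yz: "br y z \<notin> span ((\<lambda>j. br x (w j)) ` {..<m})"
  define a where "a j = (if j < m then br x (w j) else br y z)" for j
  define b where "b j = (if j < m then br y (w j) else 0)" for j
  have indep_a: "independent_family a {..<m}"
    using w by (rule independent_family_cong) (simp add: a_def)
  have "a ` {..<m} = (\<lambda>j. br x (w j)) ` {..<m}"
    by (rule image_cong) (auto simp: a_def)
  with yz have "a m \<notin> span (a ` {..<m})"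
    by (simp add: a_def)
  with indep_a have indep_Suc: "independent_family a {..<Suc m}"
    by (rule independent_family_lessThan_Suc)
  define X where "X = {t. \<not> independent_family (\<lambda>j. a j + t *s b j) {..<Suc m}}
      \<union> {t. ad_rank_ge (x + t *s y) (Suc m)} \<union> {0}"
  have "finite X"
    unfolding X_def using finite_dependent_perturbations[OF _ indep_Suc, of b] lines by simp
  then obtain t where "t \<notin> X"
    using ex_new_if_finite[OF assms(1)] by blast
  then have t: "t \<noteq> 0" "\<not> ad_rank_ge (x + t *s y) (Suc m)"
    and indep: "independent_family (\<lambda>j. a j + t *s b j) {..<Suc m}"
    unfolding X_def by simp_all
  define w' where "w' j = (if j < m then w j else inverse t *s z)" for j
  have perturbed: "a j + t *s b j = br (x + t *s y) (w' j)" if "j < Suc m" for j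
  proof (cases "j < m")
    case False
    then have "br (x + t *s y) (w' j) = inverse t *s (br x z + t *s br y z)"
      by (simp add: w'_def br_add_left br_scale_left br_scale_right)
    with False t(1) \<open>br x z = 0\<close> show ?thesis by (simp add: a_def b_def)
  qed (simp add: a_def b_def w'_def br_add_left br_scale_left)
  have "independent_family (\<lambda>j. br (x + t *s y) (w' j)) {..<Suc m}"
    using indep by (rule independent_family_cong) (simp add: perturbed)
  with t(2) show False unfolding ad_rank_ge_def by blast
qed

lemma derived_subalgebra_subset_span:
  fixes m :: nat
  assumes ad_image: "\<And>a. br x a \<in> span ((\<lambda>j. br x (w j)) ` {..<m})"
    and centralizer: "\<And>y z. br x z = 0 \<Longrightarrow> br y z \<in> span ((\<lambda>j. br x (w j)) ` {..<m})"
  shows "derived_subalgebra scale br \<subseteq>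
    span ((\<lambda>j. br x (w j)) ` {..<m} \<union> (\<lambda>(j, i). br (w i) (w j)) ` (SIGMA j:{..<m}. {..<j}))"
    (is "_ \<subseteq> span ?S")
proof -
  have U_S: "span ((\<lambda>j. br x (w j)) ` {..<m}) \<subseteq> span ?S"
    by (rule span_mono) blast
  have decompose: "\<exists>z c. br x z = 0 \<and> a = z + (\<Sum>j<m. c j *s w j)" for a
  proof -
    obtain c where "br x a = (\<Sum>j<m. c j *s br x (w j))"
      using span_image_eq_sum[OF finite_lessThan ad_image[of a]] by blast
    then have "br x (a - (\<Sum>j<m. c j *s w j)) = 0" by (simp add: br_diff_right br_sum_right)
    then show ?thesis by (intro exI[of _ "a - (\<Sum>j<m. c j *s w j)"] exI[of _ c]) simp
  qed
  have ww: "br (w i) (w j) \<in> span ?S" if "i < m" "j < m" for i j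
  proof (cases i j rule: linorder_cases)
    case less
    with that have "br (w i) (w j) \<in> ?S" by force
    then show ?thesis by (rule span_base)
  next
    case greater
    with that have "br (w j) (w i) \<in> ?S" by force
    then have "- br (w j) (w i) \<in> span ?S" by (intro span_neg span_base)
    then show ?thesis by (simp add: br_antisym[of "w i"])
  qed (simp add: span_zero)
  have wa: "br (w i) a \<in> span ?S" if "i < m" for i a
  proof -
    obtain z c where z: "br x z = 0" and a: "a = z + (\<Sum>j<m. c j *s w j)"
      using decompose by blast
    have "br (w i) a = br (w i) z + (\<Sum>j<m. c j *s br (w i) (w j))"
      unfolding a by (simp add: br_add_right br_sum_right)
    moreover have "br (w i) z \<in> span ?S" using centralizer[OF z] U_S by blast
    moreover have "(\<Sum>j<m. c j *s br (w i) (w j)) \<in> span ?S"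
      using ww that by (auto intro!: span_sum span_scale)
    ultimately show ?thesis by (simp add: span_add)
  qed
  have "br a a' \<in> span ?S" for a a'
  proof -
    obtain z c where z: "br x z = 0" and a: "a = z + (\<Sum>j<m. c j *s w j)"
      using decompose by blast
    have "br a a' = - br a' z + (\<Sum>j<m. c j *s br (w j) a')"
      unfolding a by (simp add: br_add_left br_sum_left br_antisym[of z])
    moreover have "- br a' z \<in> span ?S" using centralizer[OF z] U_S by (blast intro: span_neg)
    moreover have "(\<Sum>j<m. c j *s br (w j) a') \<in> span ?S"
      using wa by (auto intro!: span_sum span_scale)
    ultimately show ?thesis by (metis span_add)
  qed
  then show ?thesis
    unfolding derived_subalgebra_def bracket_set_def
    by (intro span_minimal) (auto simp: subspace_span)
qed

lemma edim_derived_subalgebra_le_if_covered: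
  assumes "infinite (UNIV :: 'a set)" "finite \<H>" "\<forall>H\<in>\<H>. subspace H \<and> H \<noteq> UNIV"
    and cover: "{x. enat n \<le> breadth scale br x} \<subseteq> \<Union>\<H>"
  shows "edim scale (derived_subalgebra scale br) \<le> enat (n * (n - 1) div 2)"
proof -
  have rank_lt: "k < n" if "x \<notin> \<Union>\<H>" "ad_rank_ge x k" for x k
    using enat_le_breadth_if_ad_rank_ge[OF that(2)] cover that(1)
    by (metis (mono_tags) enat_ord_simps(1) le_less_linear mem_Collect_eq order_trans subsetD)
  obtain y where "y \<notin> \<Union>\<H>"
    using ex_not_in_Union_proper_subspaces assms(1-3) by blast
  moreover have "ad_rank_ge y 0" by (simp add: ad_rank_ge_def independent_family_def)
  ultimately obtain m where "\<exists>x. x \<notin> \<Union>\<H> \<and> ad_rank_ge x m"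
    and max: "\<And>x k. x \<notin> \<Union>\<H> \<Longrightarrow> ad_rank_ge x k \<Longrightarrow> k \<le> m"
    using ex_has_greatest_nat[where P="\<lambda>k. \<exists>x. x \<notin> \<Union>\<H> \<and> ad_rank_ge x k" and b=n] rank_lt
    by (metis less_imp_le)
  then obtain x where x: "x \<notin> \<Union>\<H>" "ad_rank_ge x m" by blast
  then obtain w where w: "independent_family (\<lambda>j. br x (w j)) {..<m}"
    by (auto simp: ad_rank_ge_def)
  have not_Suc: "\<not> ad_rank_ge x (Suc m)" using max[OF x(1)] by fastforce
  have lines: "finite {t. ad_rank_ge (x + t *s y) (Suc m)}" for y
  proof (rule finite_subset)
    show "{t. ad_rank_ge (x + t *s y) (Suc m)} \<subseteq> {t. x + t *s y \<in> \<Union>\<H>}"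
      using max by fastforce
    show "finite {t. x + t *s y \<in> \<Union>\<H>}"
      using finite_line_inter_Union_subspaces assms(2,3) x(1) by simp
  qed
  have "derived_subalgebra scale br \<subseteq>
    span ((\<lambda>j. br x (w j)) ` {..<m} \<union> (\<lambda>(j, i). br (w i) (w j)) ` (SIGMA j:{..<m}. {..<j}))"
    using ad_image_subset_span[OF w not_Suc] bracket_centralizer_in_ad_image[OF assms(1) w lines]
    by (rule derived_subalgebra_subset_span)
  then have "edim scale (derived_subalgebra scale br) \<le> enat (card
    ((\<lambda>j. br x (w j)) ` {..<m} \<union> (\<lambda>(j, i). br (w i) (w j)) ` (SIGMA j:{..<m}. {..<j})))"
    by (intro edim_le_card_if_subset_span) auto
  also have "\<dots> \<le> enat (n * (n - 1) div 2)"
    using card_Un_image_lessThan_pairs_le[OF rank_lt[OF x]] by simp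
  finally show ?thesis .
qed

end

lemma alternating_bracket_if_lie_algebra:
  assumes "lie_algebra sc br"
  shows "alternating_bracket sc br"
  using assms unfolding lie_algebra_def alternating_bracket_def alternating_bracket_axioms_def
    Vector_Spaces.linear_iff
  by blast

theorem theorem1p1:
  fixes sc :: "'k::field \<Rightarrow> 'v::ab_group_add \<Rightarrow> 'v"
    and br :: "'v \<Rightarrow> 'v \<Rightarrow> 'v"
    and n :: nat
  assumes "lie_algebra sc br"
    and "infinite (UNIV :: 'k set)"
    and "nilpotent_lie sc br"
    and "edim sc (derived_subalgebra sc br) > enat (n * (n - 1) div 2)"
  shows "\<not> (\<exists>\<H>. finite \<H> \<and> (\<forall>H\<in>\<H>. lie_subalgebra sc br H \<and> H \<noteq> UNIV)
              \<and> {x. breadth sc br x \<ge> enat n} \<subseteq> \<Union>\<H>)"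
proof
  assume "\<exists>\<H>. finite \<H> \<and> (\<forall>H\<in>\<H>. lie_subalgebra sc br H \<and> H \<noteq> UNIV)
              \<and> {x. breadth sc br x \<ge> enat n} \<subseteq> \<Union>\<H>"
  then obtain \<H> where "finite \<H>" "\<forall>H\<in>\<H>. module.subspace sc H \<and> H \<noteq> UNIV"
    "{x. enat n \<le> breadth sc br x} \<subseteq> \<Union>\<H>"
    unfolding lie_subalgebra_def by blast
  with alternating_bracket.edim_derived_subalgebra_le_if_covered
    [OF alternating_bracket_if_lie_algebra[OF assms(1)] assms(2)]
  have "edim sc (derived_subalgebra sc br) \<le> enat (n * (n - 1) div 2)" by blast
  with assms(4) show False by simp
qed

end
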